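(* Let $G=(V,E)$ be a hypergraph and let $(U,\overline U)$ be a minimal balanced minimum $k$-partition split in $G$ for some integer $k\ge2$. Then for every vertex $u_0\in U$ there exists a subset $S\subseteq U\setminus\{u_0\}$ with $|S|\le 2k-3$ such that $(U,\overline U)$ is the unique minimum $(S\cup\{u_0\},\overline U)$-terminal cut in $G$.
   Context: A hypergraph $G=(V,E)$ has finite vertex set $V$ and finite multiset $E$ of unit-cost hyperedges (subsets of $V$). For $X\subseteq V$, $\overline X=V\setminus X$ and $d(X)$ is the number of hyperedges meeting both $X$ and $\overline X$. The cost of an (ordered) partition of $V$ into non-empty parts is the number of hyperedges meeting at least two parts; a minimum $k$-partition is a $k$-partition of minimum cost. A 2-partition $(U,\overline U)$ is a balanced minimum $k$-partition split if there is a minimum $k$-partition $(V_1,\dots,V_k)$ with $U=\bigcup_{i=1}^{\lfloor k/2\rfloor}V_i$; it is minimal if there is no balanced minimum $k$-partition split $(U',\overline{U'})$ with $U'\subsetneq U$. For disjoint $S,T\subseteq V$, a 2-partition $(X,\overline X)$ is an $(S,T)$-terminal cut if $S\subseteq X\subseteq V\setminus T$, and it is minimum if $d(X)$ is minimum among such cuts. *)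

theory Defs
  imports Main "HOL-Library.Multiset"
begin

definition hypergraph :: "'a set \<Rightarrow> 'a set multiset \<Rightarrow> bool" where
  "hypergraph V E \<longleftrightarrow> finite V \<and> (\<forall>e\<in>#E. e \<subseteq> V)"

definition cut_val :: "'a set \<Rightarrow> 'a set multiset \<Rightarrow> 'a set \<Rightarrow> nat" where
  "cut_val V E X = size (filter_mset (\<lambda>e. e \<inter> X \<noteq> {} \<and> e \<inter> (V - X) \<noteq> {}) E)"

definition is_k_partition :: "'a set \<Rightarrow> nat \<Rightarrow> (nat \<Rightarrow> 'a set) \<Rightarrow> bool" where
  "is_k_partition V k P \<longleftrightarrow>
     (\<forall>i<k. P i \<noteq> {}) \<and>
     (\<forall>i<k. \<forall>j<k. i \<noteq> j \<longrightarrow> P i \<inter> P j = {}) \<and>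
     (\<Union>i<k. P i) = V"

definition partition_cost :: "'a set multiset \<Rightarrow> nat \<Rightarrow> (nat \<Rightarrow> 'a set) \<Rightarrow> nat" where
  "partition_cost E k P =
     size (filter_mset (\<lambda>e. \<exists>i<k. \<exists>j<k. i \<noteq> j \<and> e \<inter> P i \<noteq> {} \<and> e \<inter> P j \<noteq> {}) E)"

definition min_k_partition :: "'a set \<Rightarrow> 'a set multiset \<Rightarrow> nat \<Rightarrow> (nat \<Rightarrow> 'a set) \<Rightarrow> bool" where
  "min_k_partition V E k P \<longleftrightarrow> is_k_partition V k P \<and>
     (\<forall>Q. is_k_partition V k Q \<longrightarrow> partition_cost E k P \<le> partition_cost E k Q)"

definition balanced_split :: "'a set \<Rightarrow> 'a set multiset \<Rightarrow> nat \<Rightarrow> 'a set \<Rightarrow> bool" where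
  "balanced_split V E k U \<longleftrightarrow>
     (\<exists>P. min_k_partition V E k P \<and> U = (\<Union>i<k div 2. P i))"

definition minimal_balanced_split :: "'a set \<Rightarrow> 'a set multiset \<Rightarrow> nat \<Rightarrow> 'a set \<Rightarrow> bool" where
  "minimal_balanced_split V E k U \<longleftrightarrow>
     balanced_split V E k U \<and> \<not> (\<exists>U'. U' \<subset> U \<and> balanced_split V E k U')"

definition terminal_cut :: "'a set \<Rightarrow> 'a set \<Rightarrow> 'a set \<Rightarrow> 'a set \<Rightarrow> bool" where
  "terminal_cut V S T X \<longleftrightarrow> X \<subseteq> V \<and> X \<noteq> {} \<and> X \<noteq> V \<and> S \<subseteq> X \<and> X \<subseteq> V - T"

definition min_terminal_cut :: "'a set \<Rightarrow> 'a set multiset \<Rightarrow> 'a set \<Rightarrow> 'a set \<Rightarrow> 'a set \<Rightarrow> bool" where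
  "min_terminal_cut V E S T X \<longleftrightarrow> terminal_cut V S T X \<and>
     (\<forall>Y. terminal_cut V S T Y \<longrightarrow> cut_val V E X \<le> cut_val V E Y)"

definition unique_min_terminal_cut :: "'a set \<Rightarrow> 'a set multiset \<Rightarrow> 'a set \<Rightarrow> 'a set \<Rightarrow> 'a set \<Rightarrow> bool" where
  "unique_min_terminal_cut V E S T X \<longleftrightarrow> min_terminal_cut V E S T X \<and>
     (\<forall>Y. min_terminal_cut V E S T Y \<longrightarrow> Y = X)"

end

theory Submission
  imports Defs
begin

(* Call a set W with {} <> W <= U - {u0} removable if d(U - W) <= d(U), and let S <= U - {u0} be
   a smallest set meeting every removable set. Then every (S Un {u0}, V - U)-terminal cut Y <> U has
   d(Y) > d(U), because U - Y is a nonempty set avoiding S, so it remains to bound |S|.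
   If |S| >= 2k - 2, minimality of S yields removable sets W_1, ..., W_(2k-2) such that W_i meets S
   exactly in an element s_i of its own. Let L_t be the set of points lying in more than t of the
   W_i and D_i the private part of W_i (points lying in W_i only). Counting hyperedge by hyperedge
   gives the uncrossing inequality
     c_1 + c_2 + sum (t = 2 .. 2k-3) d(U - L_t) <= sum_i d(U - W_i) <= (2k - 2) d(U),
   where c_1 and c_2 count the hyperedges crossing some D_i with i in the first, resp. second, half
   of the indices. The level sets L_t avoid S, so d(U - L_t) >= d(U). Each half of the private parts,
   completed by the rest of V, is a k-partition whose first floor(k/2) parts lie in U - {u0}; by
   minimality of the split it costs more than OPT >= d(U), so c_1, c_2 > d(U): a contradiction. *)

section \<open>Hyperedges crossing a set\<close>

definition crosses :: "'a set \<Rightarrow> 'a set \<Rightarrow> bool" where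
  "crosses e X \<longleftrightarrow> e \<inter> X \<noteq> {} \<and> \<not> e \<subseteq> X"

lemma cut_val_eq_crosses_compl:
  assumes "hypergraph V E"
  shows "cut_val V E X = size {#e \<in># E. crosses e (V - X)#}"
proof -
  have "e \<inter> X \<noteq> {} \<and> e \<inter> (V - X) \<noteq> {} \<longleftrightarrow> crosses e (V - X)" if "e \<in># E" for e
    using that assms unfolding hypergraph_def crosses_def by blast
  then show ?thesis
    unfolding cut_val_def by (simp cong: filter_mset_cong)
qed

lemma size_filter_mset_eq_sum_mset:
  "size (filter_mset P M) = (\<Sum>x\<in>#M. of_bool (P x))"
  by (induction M) auto

lemma sum_size_filter_mset:
  assumes "finite T"
  shows "(\<Sum>t\<in>T. size (filter_mset (P t) M)) = (\<Sum>x\<in>#M. card {t\<in>T. P t x})"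
proof (induction M)
  case (add x M)
  have "(\<Sum>t\<in>T. of_bool (P t x)) = card {t\<in>T. P t x}"
    using assms by (simp add: Collect_conj_eq Int_commute)
  moreover have "size (filter_mset (P t) (add_mset x M)) = size (filter_mset (P t) M) + of_bool (P t x)"
    for t by simp
  ultimately show ?case using add by (simp add: sum.distrib)
qed simp

section \<open>Uncrossing a family of subsets\<close>

definition cover_count :: "nat \<Rightarrow> (nat \<Rightarrow> 'a set) \<Rightarrow> 'a \<Rightarrow> nat" where
  "cover_count m W v = card {i\<in>{..<m}. v \<in> W i}"

definition private_part :: "nat \<Rightarrow> (nat \<Rightarrow> 'a set) \<Rightarrow> nat \<Rightarrow> 'a set" where
  "private_part m W i = {v \<in> W i. cover_count m W v = 1}"

definition level_set :: "nat \<Rightarrow> (nat \<Rightarrow> 'a set) \<Rightarrow> nat \<Rightarrow> 'a set" where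
  "level_set m W t = {v. t < cover_count m W v}"

lemma cover_count_le: "cover_count m W v \<le> m"
proof -
  have "card {i\<in>{..<m}. v \<in> W i} \<le> card {..<m}"
    by (rule card_mono) auto
  then show ?thesis unfolding cover_count_def by simp
qed

lemma cover_count_pos: "i < m \<Longrightarrow> v \<in> W i \<Longrightarrow> 0 < cover_count m W v"
  unfolding cover_count_def by (auto simp: card_gt_0_iff)

lemma private_part_subset: "private_part m W i \<subseteq> W i"
  unfolding private_part_def by blast

lemma private_part_unique:
  assumes "v \<in> private_part m W i" "i < m" "j < m" "v \<in> W j"
  shows "j = i"
proof -
  have "card {l\<in>{..<m}. v \<in> W l} = 1" and "v \<in> W i"
    using assms(1) unfolding private_part_def cover_count_def by auto
  from this(1) obtain l where l: "{l\<in>{..<m}. v \<in> W l} = {l}" by (rule card_1_singletonE)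
  have "i \<in> {l\<in>{..<m}. v \<in> W l}" "j \<in> {l\<in>{..<m}. v \<in> W l}"
    using assms(2-4) \<open>v \<in> W i\<close> by auto
  then show ?thesis unfolding l by simp
qed

lemma private_parts_disjoint:
  "i < m \<Longrightarrow> j < m \<Longrightarrow> i \<noteq> j \<Longrightarrow> private_part m W i \<inter> private_part m W j = {}"
proof (intro equals0I)
  fix v assume "i < m" "j < m" "i \<noteq> j" "v \<in> private_part m W i \<inter> private_part m W j"
  then show False using private_part_unique[of v m W i j] private_part_subset[of m W j] by auto
qed

lemma level_set_subset: "level_set m W t \<subseteq> (\<Union>i<m. W i)"
proof
  fix v assume "v \<in> level_set m W t"
  then have "0 < card {i\<in>{..<m}. v \<in> W i}"
    unfolding level_set_def cover_count_def by simp
  then have "{i\<in>{..<m}. v \<in> W i} \<noteq> {}" by (rule card_gt_0_iff[THEN iffD1, THEN conjunct1])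
  then show "v \<in> (\<Union>i<m. W i)" by blast
qed

lemma crosses_if_crosses_private_part:
  assumes "crosses e (private_part m W i)" "i < m" "l < m" "l \<noteq> i" "e \<inter> W l \<noteq> {}"
  shows "crosses e (W l)"
proof -
  obtain u where u: "u \<in> e" "u \<in> private_part m W i"
    using assms(1) unfolding crosses_def by blast
  have "u \<notin> W l" using private_part_unique[OF u(2) assms(2,3)] assms(4) by blast
  then show ?thesis using u(1) assms(5) unfolding crosses_def by blast
qed

lemma cover_count_diff_le_card_crossing:
  assumes "v \<in> e" and "w \<in> e"
  shows "cover_count m W v - cover_count m W w \<le> card {i\<in>{..<m}. crosses e (W i)}"
proof -
  let ?I = "\<lambda>v. {i\<in>{..<m}. v \<in> W i}"
  have "?I v - ?I w \<subseteq> {i\<in>{..<m}. crosses e (W i)}"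
    using assms unfolding crosses_def by blast
  then have "card (?I v - ?I w) \<le> card {i\<in>{..<m}. crosses e (W i)}"
    by (intro card_mono) auto
  moreover have "card (?I v) - card (?I w) \<le> card (?I v - ?I w)"
    by (rule diff_card_le_card_Diff) auto
  ultimately show ?thesis unfolding cover_count_def by linarith
qed

lemma card_crossing_if_crosses_private_part:
  assumes "crosses e (private_part m W i)" and "i < m" and "v \<in> e"
  shows "cover_count m W v - 1 \<le> card {l\<in>{..<m}. crosses e (W l)}"
    and "1 \<le> card {l\<in>{..<m}. crosses e (W l)}"
proof -
  let ?R = "{l\<in>{..<m}. crosses e (W l)}"
  let ?I = "{l\<in>{..<m}. v \<in> W l}"
  have "?I - {i} \<subseteq> ?R"
    using assms crosses_if_crosses_private_part[of e m W i] by blast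
  then have "card (?I - {i}) \<le> card ?R" by (intro card_mono) auto
  moreover have "card ?I - card {i} \<le> card (?I - {i})"
    by (rule diff_card_le_card_Diff) auto
  ultimately show "cover_count m W v - 1 \<le> card ?R" unfolding cover_count_def by simp
  obtain u w where u: "u \<in> e" "u \<in> private_part m W i" and w: "w \<in> e" "w \<notin> private_part m W i"
    using assms(1) unfolding crosses_def by blast
  have "?R \<noteq> {}"
  proof (cases "w \<in> W i")
    case False
    then have "i \<in> ?R" using assms(2) u w private_part_subset[of m W i] unfolding crosses_def by blast
    then show ?thesis by blast
  next
    case True
    then have "cover_count m W w \<noteq> 1" and "0 < cover_count m W w"
      using w(2) cover_count_pos[of i m w W] assms(2) by (auto simp: private_part_def)
    then have "\<not> {l\<in>{..<m}. w \<in> W l} \<subseteq> {i}"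
      using card_mono[of "{i}" "{l\<in>{..<m}. w \<in> W l}"] unfolding cover_count_def by auto
    then obtain l where "l < m" "w \<in> W l" "l \<noteq> i" by blast
    then have "l \<in> ?R" using crosses_if_crosses_private_part[of e m W i l] assms(1,2) w(1) by blast
    then show ?thesis by blast
  qed
  then show "1 \<le> card ?R" by (simp add: Suc_le_eq card_gt_0_iff)
qed

lemma card_crossing_if_crosses_two_private_parts:
  assumes "crosses e (private_part m W i)" and "crosses e (private_part m W j)"
    and "i < m" and "j < m" and "i \<noteq> j" and "v \<in> e"
  shows "max 2 (cover_count m W v) \<le> card {l\<in>{..<m}. crosses e (W l)}"
proof -
  let ?I = "{l\<in>{..<m}. v \<in> W l}"
  have "e \<inter> W l \<noteq> {}" if "crosses e (private_part m W l)" for l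
    using that private_part_subset[of m W l] unfolding crosses_def by blast
  then have "insert i (insert j ?I) \<subseteq> {l\<in>{..<m}. crosses e (W l)}"
    using assms crosses_if_crosses_private_part[of e m W i] crosses_if_crosses_private_part[of e m W j]
    by blast
  then have "card (insert i (insert j ?I)) \<le> card {l\<in>{..<m}. crosses e (W l)}"
    by (intro card_mono) auto
  moreover have "card {i, j} \<le> card (insert i (insert j ?I))" "card ?I \<le> card (insert i (insert j ?I))"
    by (intro card_mono; auto)+
  ultimately show ?thesis using assms(5) unfolding cover_count_def by simp
qed

lemma uncrossing_count_inner:
  "min 2 (card {i\<in>{..<m}. crosses e (private_part m W i)})
     + card {t\<in>{2..<m}. crosses e (level_set m W t)}
   \<le> card {i\<in>{..<m}. crosses e (W i)}"
  (is "min 2 (card ?G) + card ?T \<le> card ?R")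
proof (cases "e = {}")
  case True
  then show ?thesis by (simp add: crosses_def)
next
  case False
  then obtain v0 where "v0 \<in> e" by blast
  obtain vmin where vmin: "vmin \<in> e" "\<And>v. v \<in> e \<Longrightarrow> cover_count m W vmin \<le> cover_count m W v"
    using ex_has_least_nat[of "\<lambda>v. v \<in> e" v0 "cover_count m W"] \<open>v0 \<in> e\<close> by blast
  have "\<forall>v. v \<in> e \<longrightarrow> cover_count m W v < Suc m"
    using cover_count_le[of m W] by (simp add: less_Suc_eq_le)
  then obtain vmax where vmax: "vmax \<in> e" "\<And>v. v \<in> e \<Longrightarrow> cover_count m W v \<le> cover_count m W vmax"
    using Lattices_Big.ex_has_greatest_nat[of "\<lambda>v. v \<in> e" v0 "cover_count m W" "Suc m"] \<open>v0 \<in> e\<close>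
    by blast
  have "?T \<subseteq> {max 2 (cover_count m W vmin)..<cover_count m W vmax}"
  proof
    fix t assume "t \<in> ?T"
    then obtain v w where "2 \<le> t" "v \<in> e" "\<not> t < cover_count m W v" "w \<in> e" "t < cover_count m W w"
      unfolding crosses_def level_set_def by auto
    with vmin(2)[of v] vmax(2)[of w] show "t \<in> {max 2 (cover_count m W vmin)..<cover_count m W vmax}"
      by auto
  qed
  then have card_T: "card ?T \<le> cover_count m W vmax - max 2 (cover_count m W vmin)"
    using card_mono[of "{max 2 (cover_count m W vmin)..<cover_count m W vmax}" ?T] by simp
  consider "?G = {}" | i where "?G = {i}" | i j where "i \<in> ?G" "j \<in> ?G" "i \<noteq> j"
    by blast
  then show ?thesis
  proof cases
    case 1
    have "card ?T \<le> card ?R"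
      using card_T cover_count_diff_le_card_crossing[OF vmax(1) vmin(1), of m W] by arith
    then show ?thesis unfolding 1 by simp
  next
    case (2 i)
    then have "i < m" "crosses e (private_part m W i)" by blast+
    then have "cover_count m W vmax - 1 \<le> card ?R" "1 \<le> card ?R"
      using card_crossing_if_crosses_private_part[of e m W i vmax] vmax(1) by simp_all
    then have "1 + card ?T \<le> card ?R" using card_T by arith
    then show ?thesis unfolding 2 by simp
  next
    case (3 i j)
    then have "max 2 (cover_count m W vmax) \<le> card ?R"
      using vmax(1) by (intro card_crossing_if_crosses_two_private_parts) auto
    then have "2 + card ?T \<le> card ?R" using card_T by arith
    then show ?thesis by linarith
  qed
qed

lemma containing_parts_if_meets_private_part:
  assumes "a \<inter> private_part m W i \<noteq> {}" and "i < m"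
  shows "{j\<in>{..<m}. a \<subseteq> W j} \<subseteq> {i}"
  using assms private_part_unique[of _ m W i] by blast

lemma uncrossing_count_outer:
  assumes "2 \<le> m"
  shows "min 2 (card {i\<in>{..<m}. a \<inter> private_part m W i \<noteq> {}})
           + card {t\<in>{2..<m}. \<not> a \<subseteq> level_set m W t}
         \<le> card {i\<in>{..<m}. \<not> a \<subseteq> W i}"
  (is "min 2 (card ?G) + card ?T \<le> card ?R")
proof (cases "a = {}")
  case True
  then show ?thesis by simp
next
  case False
  define C where "C = {i\<in>{..<m}. a \<subseteq> W i}"
  have "?R = {..<m} - C" and "C \<subseteq> {..<m}" unfolding C_def by blast+
  then have card_R: "card ?R = m - card C" by (simp add: card_Diff_subset finite_subset)
  have "?T \<subseteq> {max 2 (card C)..<m}"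
  proof
    fix t assume "t \<in> ?T"
    then obtain v where "2 \<le> t" "t < m" "v \<in> a" "\<not> t < cover_count m W v"
      unfolding level_set_def by auto
    moreover have "card C \<le> cover_count m W v"
      unfolding cover_count_def C_def using \<open>v \<in> a\<close> by (intro card_mono) auto
    ultimately show "t \<in> {max 2 (card C)..<m}" by auto
  qed
  then have card_T: "card ?T \<le> m - max 2 (card C)"
    using card_mono[of "{max 2 (card C)..<m}" ?T] by simp
  show ?thesis
  proof (cases "?G = {}")
    case True
    have "card ?T \<le> card ?R" using card_R card_T by arith
    then show ?thesis unfolding True by simp
  next
    case False
    then obtain i where "i \<in> ?G" by blast
    then have "C \<subseteq> {i}" unfolding C_def by (intro containing_parts_if_meets_private_part) auto
    then have "card C \<le> 1" using card_mono[of "{i}" C] by simp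
    moreover have "min 2 (card ?G) + card C \<le> 2"
    proof (cases "C = {}")
      case False
      have "j = i" if "j \<in> ?G" for j
        using \<open>C \<subseteq> {i}\<close> \<open>C \<noteq> {}\<close> containing_parts_if_meets_private_part[of a m W j] that
        unfolding C_def by auto
      then have "?G \<subseteq> C" using \<open>C \<subseteq> {i}\<close> \<open>C \<noteq> {}\<close> by blast
      then have "card ?G \<le> card C" unfolding C_def by (intro card_mono) auto
      with \<open>card C \<le> 1\<close> show ?thesis by linarith
    qed simp
    ultimately show ?thesis using card_R card_T assms by arith
  qed
qed

(* Z plays the role of V - U: for X <= U, a hyperedge crosses the cut U - X iff it crosses Z Un X. *)
lemma uncrossing_count:
  assumes "2 \<le> m" and "\<And>i. i < m \<Longrightarrow> Z \<inter> W i = {}"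
  shows "min 2 (card {i\<in>{..<m}. crosses e (private_part m W i)})
           + card {t\<in>{2..<m}. crosses e (Z \<union> level_set m W t)}
         \<le> card {i\<in>{..<m}. crosses e (Z \<union> W i)}"
proof (cases "e \<inter> Z = {}")
  case True
  then have "crosses e (Z \<union> X) \<longleftrightarrow> crosses e X" for X
    unfolding crosses_def by blast
  then show ?thesis using uncrossing_count_inner[of m e W] by simp
next
  case False
  have "crosses e (Z \<union> X) \<longleftrightarrow> \<not> e - Z \<subseteq> X" for X
    using False unfolding crosses_def by blast
  moreover have "{i\<in>{..<m}. crosses e (private_part m W i)}
      = {i\<in>{..<m}. (e - Z) \<inter> private_part m W i \<noteq> {}}"
    using False assms(2) private_part_subset[of m W] unfolding crosses_def by blast
  ultimately show ?thesis using uncrossing_count_outer[OF assms(1), of "e - Z" W] by simp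
qed

lemma disjoint_hits_le_min_card:
  assumes "H1 \<inter> H2 = {}" and "finite G"
  shows "of_bool (H1 \<inter> G \<noteq> {}) + of_bool (H2 \<inter> G \<noteq> {}) \<le> min 2 (card G)"
proof (cases "H1 \<inter> G \<noteq> {} \<and> H2 \<inter> G \<noteq> {}")
  case True
  then obtain i j where "i \<in> H1 \<inter> G" "j \<in> H2 \<inter> G" by blast
  with assms have "card {i, j} \<le> card G" "i \<noteq> j" by (auto intro: card_mono)
  then show ?thesis using True by simp
next
  case False
  have "G \<noteq> {} \<Longrightarrow> 1 \<le> card G" using assms(2) by (simp add: Suc_le_eq card_gt_0_iff)
  with False show ?thesis by auto
qed

lemma cut_val_uncrossing:
  assumes "hypergraph V E" and "U \<subseteq> V" and "2 \<le> m" and W: "\<And>i. i < m \<Longrightarrow> W i \<subseteq> U"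
    and "H1 \<subseteq> {..<m}" and "H2 \<subseteq> {..<m}" and "H1 \<inter> H2 = {}"
  shows "size {#e \<in># E. \<exists>i\<in>H1. crosses e (private_part m W i)#}
           + size {#e \<in># E. \<exists>i\<in>H2. crosses e (private_part m W i)#}
           + (\<Sum>t\<in>{2..<m}. cut_val V E (U - level_set m W t))
         \<le> (\<Sum>i<m. cut_val V E (U - W i))"
proof -
  define Z where "Z = V - U"
  define G where "G e = {i\<in>{..<m}. crosses e (private_part m W i)}" for e
  have cut_eq: "cut_val V E (U - X) = size {#e \<in># E. crosses e (Z \<union> X)#}" if "X \<subseteq> U" for X
  proof -
    have "V - (U - X) = Z \<union> X" using that assms(2) unfolding Z_def by blast
    then show ?thesis using cut_val_eq_crosses_compl[OF assms(1)] by simp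
  qed
  have "level_set m W t \<subseteq> U" for t using level_set_subset[of m W t] W by blast
  then have levels: "(\<Sum>t\<in>{2..<m}. cut_val V E (U - level_set m W t))
      = (\<Sum>e\<in>#E. card {t\<in>{2..<m}. crosses e (Z \<union> level_set m W t)})"
    by (simp add: cut_eq sum_size_filter_mset)
  have parts: "(\<Sum>i<m. cut_val V E (U - W i)) = (\<Sum>e\<in>#E. card {i\<in>{..<m}. crosses e (Z \<union> W i)})"
    by (simp add: cut_eq W sum_size_filter_mset)
  have hits: "size {#e \<in># E. \<exists>i\<in>H. crosses e (private_part m W i)#}
      = (\<Sum>e\<in>#E. of_bool (H \<inter> G e \<noteq> {}))" if "H \<subseteq> {..<m}" for H
  proof -
    have "(\<exists>i\<in>H. crosses e (private_part m W i)) \<longleftrightarrow> H \<inter> G e \<noteq> {}" for e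
      using that unfolding G_def by blast
    then show ?thesis by (simp add: size_filter_mset_eq_sum_mset)
  qed
  have "of_bool (H1 \<inter> G e \<noteq> {}) + of_bool (H2 \<inter> G e \<noteq> {})
          + card {t\<in>{2..<m}. crosses e (Z \<union> level_set m W t)}
        \<le> card {i\<in>{..<m}. crosses e (Z \<union> W i)}" for e
  proof -
    have "Z \<inter> W i = {}" if "i < m" for i using W[OF that] unfolding Z_def by blast
    then have "min 2 (card (G e)) + card {t\<in>{2..<m}. crosses e (Z \<union> level_set m W t)}
        \<le> card {i\<in>{..<m}. crosses e (Z \<union> W i)}"
      unfolding G_def using uncrossing_count[OF assms(3)] by blast
    moreover have "finite (G e)" unfolding G_def by simp
    ultimately show ?thesis using disjoint_hits_le_min_card[OF assms(7)] by (meson add_right_mono le_trans)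
  qed
  then show ?thesis
    unfolding hits[OF assms(5)] hits[OF assms(6)] levels parts sum_mset.distrib[symmetric]
    by (rule sum_mset_mono)
qed

section \<open>Partitions and balanced splits\<close>

lemma is_k_partition_extend:
  assumes ne: "\<And>i. i < n \<Longrightarrow> F i \<noteq> {}" and psub: "(\<Union>i<n. F i) \<subset> V"
    and disj: "\<And>i j. i < n \<Longrightarrow> j < n \<Longrightarrow> i \<noteq> j \<Longrightarrow> F i \<inter> F j = {}"
  shows "is_k_partition V (Suc n) (\<lambda>j. if j < n then F j else V - (\<Union>i<n. F i))"
proof -
  let ?P = "\<lambda>j. if j < n then F j else V - (\<Union>i<n. F i)"
  have "?P i \<noteq> {}" if "i < Suc n" for i
    using ne psub by auto
  moreover have "?P i \<inter> ?P j = {}" if "i < Suc n" "j < Suc n" "i \<noteq> j" for i j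
    using that disj by auto
  moreover have "(\<Union>i<Suc n. ?P i) = V"
    using psub by (auto simp: lessThan_Suc)
  ultimately show ?thesis unfolding is_k_partition_def by blast
qed

lemma partition_cost_le_crossing:
  assumes "is_k_partition V (Suc n) P"
  shows "partition_cost E (Suc n) P \<le> size {#e \<in># E. \<exists>i<n. crosses e (P i)#}"
  unfolding partition_cost_def
proof (intro size_mset_mono filter_mset_mono_strong subset_mset.order_refl)
  fix e assume "\<exists>i<Suc n. \<exists>j<Suc n. i \<noteq> j \<and> e \<inter> P i \<noteq> {} \<and> e \<inter> P j \<noteq> {}"
  then obtain i j where ij: "i < Suc n" "j < Suc n" "i \<noteq> j" "e \<inter> P i \<noteq> {}" "e \<inter> P j \<noteq> {}"
    by blast
  have "P i \<inter> P j = {}" using assms ij(1-3) unfolding is_k_partition_def by blast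
  with ij have "crosses e (P i)" "crosses e (P j)" unfolding crosses_def by blast+
  with ij(1-3) show "\<exists>i<n. crosses e (P i)"
    by (metis less_SucE)
qed

lemma cut_val_union_parts_le_cost:
  assumes "is_k_partition V k P" and "h \<le> k"
  shows "cut_val V E (\<Union>i<h. P i) \<le> partition_cost E k P"
  unfolding cut_val_def partition_cost_def
proof (intro size_mset_mono filter_mset_mono_strong subset_mset.order_refl)
  fix e assume "e \<inter> (\<Union>i<h. P i) \<noteq> {} \<and> e \<inter> (V - (\<Union>i<h. P i)) \<noteq> {}"
  then obtain i w where i: "i < h" "e \<inter> P i \<noteq> {}" and w: "w \<in> e" "w \<in> V" "w \<notin> (\<Union>i<h. P i)"
    by blast
  moreover obtain j where "j < k" "w \<in> P j"
    using assms(1) w(2) unfolding is_k_partition_def by blast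
  ultimately show "\<exists>i<k. \<exists>j<k. i \<noteq> j \<and> e \<inter> P i \<noteq> {} \<and> e \<inter> P j \<noteq> {}"
    using assms(2) by (intro exI[of _ i] exI[of _ j]) auto
qed

lemma union_parts_psubset:
  assumes "is_k_partition V k P" and "h < k"
  shows "(\<Union>i<h. P i) \<subset> V"
proof -
  have "P h \<noteq> {}" "P h \<subseteq> V" "\<forall>i<h. P i \<inter> P h = {}" "(\<Union>i<h. P i) \<subseteq> V"
    using assms unfolding is_k_partition_def by auto
  then show ?thesis by blast
qed

lemma minimal_balanced_split_cost_less:
  assumes "minimal_balanced_split V E k U" and "min_k_partition V E k P"
    and "is_k_partition V k Q" and "(\<Union>i<k div 2. Q i) \<subset> U"
  shows "partition_cost E k P < partition_cost E k Q"
proof (rule ccontr)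
  assume "\<not> ?thesis"
  with assms(2,3) have "min_k_partition V E k Q"
    unfolding min_k_partition_def by (meson le_trans not_less)
  then have "balanced_split V E k (\<Union>i<k div 2. Q i)"
    unfolding balanced_split_def by blast
  with assms(1,4) show False unfolding minimal_balanced_split_def by blast
qed

section \<open>Removable sets and their blockers\<close>

definition removable :: "'a set \<Rightarrow> 'a set multiset \<Rightarrow> 'a set \<Rightarrow> 'a \<Rightarrow> 'a set \<Rightarrow> bool" where
  "removable V E U u0 W \<longleftrightarrow> W \<noteq> {} \<and> W \<subseteq> U - {u0} \<and> cut_val V E (U - W) \<le> cut_val V E U"

definition removal_blocker :: "'a set \<Rightarrow> 'a set multiset \<Rightarrow> 'a set \<Rightarrow> 'a \<Rightarrow> 'a set \<Rightarrow> bool" where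
  "removal_blocker V E U u0 S \<longleftrightarrow> S \<subseteq> U - {u0} \<and> (\<forall>W. removable V E U u0 W \<longrightarrow> W \<inter> S \<noteq> {})"

lemma cut_val_less_if_avoids_blocker:
  assumes "removal_blocker V E U u0 S" and "X \<noteq> {}" and "X \<subseteq> U - {u0}" and "X \<inter> S = {}"
  shows "cut_val V E U < cut_val V E (U - X)"
proof -
  have "\<not> removable V E U u0 X" using assms(1,4) unfolding removal_blocker_def by blast
  then show ?thesis using assms(2,3) unfolding removable_def by simp
qed

lemma unique_min_terminal_cut_if_blocker:
  assumes "removal_blocker V E U u0 S" and "u0 \<in> U" and "U \<subset> V"
  shows "unique_min_terminal_cut V E (S \<union> {u0}) (V - U) U"
proof -
  have U: "terminal_cut V (S \<union> {u0}) (V - U) U"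
    using assms unfolding terminal_cut_def removal_blocker_def by auto
  have less: "cut_val V E U < cut_val V E Y"
    if "terminal_cut V (S \<union> {u0}) (V - U) Y" and "Y \<noteq> U" for Y
  proof -
    have "Y \<subseteq> U" "S \<union> {u0} \<subseteq> Y" using that(1) unfolding terminal_cut_def by auto
    then have "cut_val V E U < cut_val V E (U - (U - Y))"
      using that(2) by (intro cut_val_less_if_avoids_blocker[OF assms(1)]) auto
    moreover have "U - (U - Y) = Y" using \<open>Y \<subseteq> U\<close> by blast
    ultimately show ?thesis by simp
  qed
  show ?thesis
    unfolding unique_min_terminal_cut_def min_terminal_cut_def
  proof (intro conjI allI impI)
    fix Y assume "terminal_cut V (S \<union> {u0}) (V - U) Y"
    then show "cut_val V E U \<le> cut_val V E Y" using less[of Y] by (cases "Y = U") auto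
  next
    fix Y assume Y: "terminal_cut V (S \<union> {u0}) (V - U) Y \<and>
      (\<forall>Y'. terminal_cut V (S \<union> {u0}) (V - U) Y' \<longrightarrow> cut_val V E Y \<le> cut_val V E Y')"
    then have "cut_val V E Y \<le> cut_val V E U" using U by blast
    with Y less[of Y] show "Y = U" by (meson not_less)
  qed (rule U)
qed

lemma min_blocker_witness:
  assumes "finite S" and "removal_blocker V E U u0 S"
    and "\<And>S'. removal_blocker V E U u0 S' \<Longrightarrow> card S \<le> card S'" and "s \<in> S"
  obtains W where "removable V E U u0 W" and "W \<inter> S = {s}"
proof -
  have "card (S - {s}) < card S" using assms(1,4) by (rule card_Diff1_less)
  then have "\<not> removal_blocker V E U u0 (S - {s})" using assms(3) by (meson not_le)
  then obtain W where "removable V E U u0 W" "W \<inter> (S - {s}) = {}"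
    using assms(2) unfolding removal_blocker_def by blast
  moreover have "W \<inter> S \<noteq> {}" using assms(2) \<open>removable V E U u0 W\<close>
    unfolding removal_blocker_def by blast
  ultimately show ?thesis using that by blast
qed

lemma cover_count_le_one:
  assumes "inj_on s {..<m}" and "\<And>j. j < m \<Longrightarrow> W j \<inter> S \<subseteq> {s j}" and "v \<in> S"
  shows "cover_count m W v \<le> 1"
proof -
  have "{j\<in>{..<m}. v \<in> W j} \<subseteq> {j\<in>{..<m}. s j = v}" using assms(2,3) by blast
  moreover have "card {j\<in>{..<m}. s j = v} \<le> 1"
    using assms(1) by (auto simp: card_le_Suc0_iff_eq inj_on_def)
  ultimately show ?thesis unfolding cover_count_def
    using card_mono[of "{j\<in>{..<m}. s j = v}" "{j\<in>{..<m}. v \<in> W j}"] by simp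
qed

lemma opt_less_crossing_disjoint_family:
  assumes "2 \<le> k" and "U \<subset> V" and "u0 \<in> U"
    and strict: "\<And>Q. is_k_partition V k Q \<Longrightarrow> (\<Union>i<k div 2. Q i) \<subset> U \<Longrightarrow> OPT < partition_cost E k Q"
    and ne: "\<And>i. i < k - 1 \<Longrightarrow> F i \<noteq> {}" and sub: "\<And>i. i < k - 1 \<Longrightarrow> F i \<subseteq> U - {u0}"
    and disj: "\<And>i j. i < k - 1 \<Longrightarrow> j < k - 1 \<Longrightarrow> i \<noteq> j \<Longrightarrow> F i \<inter> F j = {}"
  shows "OPT < size {#e \<in># E. \<exists>i<k - 1. crosses e (F i)#}"
proof -
  define Q where "Q j = (if j < k - 1 then F j else V - (\<Union>i<k - 1. F i))" for j
  have "(\<Union>i<k - 1. F i) \<subset> V" using assms(2,3) sub by blast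
  then have "is_k_partition V (Suc (k - 1)) Q"
    unfolding Q_def using ne disj by (intro is_k_partition_extend[of "k - 1" F V])
  then have Q: "is_k_partition V k Q" using assms(1) by simp
  have "Q i \<subseteq> U - {u0}" if "i < k div 2" for i
  proof -
    have "i < k - 1" using that assms(1) by presburger
    then show ?thesis unfolding Q_def using sub by simp
  qed
  then have "(\<Union>i<k div 2. Q i) \<subseteq> U - {u0}" by blast
  then have "OPT < partition_cost E k Q"
    using assms(3) by (intro strict[OF Q]) blast
  also have "\<dots> \<le> size {#e \<in># E. \<exists>i<k - 1. crosses e (Q i)#}"
    using partition_cost_le_crossing[OF \<open>is_k_partition V (Suc (k - 1)) Q\<close>] assms(1) by simp
  also have "\<dots> = size {#e \<in># E. \<exists>i<k - 1. crosses e (F i)#}"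
    unfolding Q_def by (simp cong: filter_mset_cong conj_cong)
  finally show ?thesis .
qed

lemma opt_less_crossing_private_parts:
  assumes k: "2 \<le> k" and "U \<subset> V" and "u0 \<in> U"
    and strict: "\<And>Q. is_k_partition V k Q \<Longrightarrow> (\<Union>i<k div 2. Q i) \<subset> U \<Longrightarrow> OPT < partition_cost E k Q"
    and W: "\<And>i. i < m \<Longrightarrow> W i \<subseteq> U - {u0}"
    and nonempty: "\<And>i. i < m \<Longrightarrow> private_part m W i \<noteq> {}"
    and "j + (k - 1) \<le> m"
  shows "OPT < size {#e \<in># E. \<exists>i\<in>(+) j ` {..<k - 1}. crosses e (private_part m W i)#}"
proof -
  have idx: "j + i < m" if "i < k - 1" for i using that assms(7) by linarith
  have "OPT < size {#e \<in># E. \<exists>i<k - 1. crosses e (private_part m W (j + i))#}"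
  proof (rule opt_less_crossing_disjoint_family[OF k assms(2,3) strict])
    show "private_part m W (j + i) \<noteq> {}" if "i < k - 1" for i
      using nonempty[OF idx[OF that]] .
    show "private_part m W (j + i) \<subseteq> U - {u0}" if "i < k - 1" for i
      using W[OF idx[OF that]] private_part_subset[of m W "j + i"] by blast
    show "private_part m W (j + i) \<inter> private_part m W (j + i') = {}"
      if "i < k - 1" "i' < k - 1" "i \<noteq> i'" for i i'
      using private_parts_disjoint[OF idx idx] that by simp
  qed
  then show ?thesis by (simp add: Bex_def)
qed

lemma no_large_removable_family:
  assumes "hypergraph V E" and k: "2 \<le> k" and "U \<subset> V" and "u0 \<in> U"
    and opt: "cut_val V E U \<le> OPT"
    and strict: "\<And>Q. is_k_partition V k Q \<Longrightarrow> (\<Union>i<k div 2. Q i) \<subset> U \<Longrightarrow> OPT < partition_cost E k Q"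
    and W: "\<And>i. i < 2 * k - 2 \<Longrightarrow> removable V E U u0 (W i)"
    and nonempty: "\<And>i. i < 2 * k - 2 \<Longrightarrow> private_part (2 * k - 2) W i \<noteq> {}"
    and levels: "\<And>t. 2 \<le> t \<Longrightarrow> cut_val V E U \<le> cut_val V E (U - level_set (2 * k - 2) W t)"
  shows False
proof -
  define m where "m = 2 * k - 2"
  define c where "c = cut_val V E U"
  obtain n where n: "k = Suc n" using k by (cases k) auto
  have m: "m = n + n" "2 \<le> m" using k unfolding m_def n by auto
  have W_sub: "W i \<subseteq> U - {u0}" if "i < m" for i
    using W that unfolding m_def removable_def by blast
  note halves = opt_less_crossing_private_parts[OF k assms(3,4) strict W_sub nonempty[folded m_def]]
  have "size {#e \<in># E. \<exists>i\<in>{..<n}. crosses e (private_part m W i)#}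
          + size {#e \<in># E. \<exists>i\<in>(+) n ` {..<n}. crosses e (private_part m W i)#}
          + (\<Sum>t\<in>{2..<m}. cut_val V E (U - level_set m W t))
        \<le> (\<Sum>i<m. cut_val V E (U - W i))"
    using W_sub m by (intro cut_val_uncrossing[OF assms(1)]) (use assms(3) in auto)
  moreover have "OPT < size {#e \<in># E. \<exists>i\<in>{..<n}. crosses e (private_part m W i)#}"
    using halves[of 0] m n by simp
  moreover have "OPT < size {#e \<in># E. \<exists>i\<in>(+) n ` {..<n}. crosses e (private_part m W i)#}"
    using halves[of n] m n by simp
  moreover have "(m - 2) * c \<le> (\<Sum>t\<in>{2..<m}. cut_val V E (U - level_set m W t))"
    using sum_bounded_below[of "{2..<m}" c] levels unfolding c_def m_def by simp
  moreover have "(\<Sum>i<m. cut_val V E (U - W i)) \<le> m * c"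
    using sum_bounded_above[of "{..<m}" _ c] W unfolding c_def m_def removable_def by simp
  moreover have "m * c = (m - 2) * c + 2 * c"
    using m(2) by (metis le_add_diff_inverse2 add_mult_distrib)
  ultimately show False using opt unfolding c_def by linarith
qed

lemma card_min_blocker_le:
  assumes "hypergraph V E" and k: "2 \<le> k" and "U \<subset> V" and "u0 \<in> U"
    and "cut_val V E U \<le> OPT"
    and "\<And>Q. is_k_partition V k Q \<Longrightarrow> (\<Union>i<k div 2. Q i) \<subset> U \<Longrightarrow> OPT < partition_cost E k Q"
    and S: "removal_blocker V E U u0 S"
    and S_min: "\<And>S'. removal_blocker V E U u0 S' \<Longrightarrow> card S \<le> card S'"
  shows "card S \<le> 2 * k - 3"
proof (rule ccontr)
  assume large: "\<not> card S \<le> 2 * k - 3"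
  define m where "m = 2 * k - 2"
  have "S \<subseteq> V" using S assms(3) unfolding removal_blocker_def by blast
  then have "finite S" using assms(1) finite_subset unfolding hypergraph_def by blast
  moreover have "card {..<m} \<le> card S" using large k unfolding m_def by simp
  ultimately obtain s where s: "s ` {..<m} \<subseteq> S" "inj_on s {..<m}"
    using card_le_inj[of "{..<m}" S] by blast
  have "\<forall>i\<in>{..<m}. \<exists>X. removable V E U u0 X \<and> X \<inter> S = {s i}"
    using min_blocker_witness[OF \<open>finite S\<close> S S_min] s(1) by blast
  then obtain W where W: "\<And>i. i < m \<Longrightarrow> removable V E U u0 (W i) \<and> W i \<inter> S = {s i}"
    by (metis bchoice lessThan_iff)
  have cover_S: "cover_count m W v \<le> 1" if "v \<in> S" for v
    using cover_count_le_one[OF s(2) _ that] W by blast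
  have "private_part m W i \<noteq> {}" if "i < m" for i
  proof -
    have "s i \<in> W i" "s i \<in> S" using W[OF that] by blast+
    then have "cover_count m W (s i) = 1"
      using cover_S[of "s i"] cover_count_pos[of i m "s i" W] that by linarith
    then show ?thesis unfolding private_part_def using \<open>s i \<in> W i\<close> by blast
  qed
  moreover have "cut_val V E U \<le> cut_val V E (U - level_set m W t)" if "1 \<le> t" for t
  proof (cases "level_set m W t = {}")
    case False
    have "level_set m W t \<subseteq> U - {u0}"
      using level_set_subset[of m W t] W unfolding removable_def by blast
    moreover have "level_set m W t \<inter> S = {}"
      using cover_S that unfolding level_set_def by fastforce
    ultimately show ?thesis
      using cut_val_less_if_avoids_blocker[OF S False] by simp
  qed simp
  ultimately show False
    using no_large_removable_family[OF assms(1-6), of W] W unfolding m_def by auto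
qed

theorem theorem5p2:
  fixes V :: "'a set" and E :: "'a set multiset" and k :: nat and U :: "'a set"
  assumes "hypergraph V E"
    and "k \<ge> 2"
    and "minimal_balanced_split V E k U"
    and "u0 \<in> U"
  shows "\<exists>S. S \<subseteq> U - {u0} \<and> card S \<le> 2 * k - 3 \<and>
           unique_min_terminal_cut V E (S \<union> {u0}) (V - U) U"
proof -
  obtain P where P: "min_k_partition V E k P" and U: "U = (\<Union>i<k div 2. P i)"
    using assms(3) unfolding minimal_balanced_split_def balanced_split_def by blast
  have P_part: "is_k_partition V k P" using P unfolding min_k_partition_def by blast
  have "k div 2 < k" using assms(2) by simp
  then have "U \<subset> V" and "cut_val V E U \<le> partition_cost E k P"
    unfolding U by (simp_all add: union_parts_psubset[OF P_part] cut_val_union_parts_le_cost[OF P_part])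
  have "removal_blocker V E U u0 (U - {u0})"
    unfolding removal_blocker_def removable_def by blast
  then obtain S where S: "removal_blocker V E U u0 S"
    and S_min: "\<And>S'. removal_blocker V E U u0 S' \<Longrightarrow> card S \<le> card S'"
    using ex_has_least_nat[of "removal_blocker V E U u0" _ card] by metis
  have "card S \<le> 2 * k - 3"
    using card_min_blocker_le[OF assms(1,2) \<open>U \<subset> V\<close> assms(4) \<open>cut_val V E U \<le> _\<close> _ S S_min]
      minimal_balanced_split_cost_less[OF assms(3) P] by blast
  moreover have "unique_min_terminal_cut V E (S \<union> {u0}) (V - U) U"
    using unique_min_terminal_cut_if_blocker[OF S assms(4) \<open>U \<subset> V\<close>] .
  ultimately show ?thesis using S unfolding removal_blocker_def by blast
qed

end
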